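(* Let $N\ge 2$, $0<p<1\le q$ with $pq<1$. Consider the vector field $g:\mathbb{R}^3\to\mathbb{R}^3$, $$g(Y,Z,W)=\big(Y(W-(N-2)-Y),\ Z(N+pY-Z),\ W(qZ-qN+q+N-W)\big).$$ Then the equilibrium $$\zeta_2=\Big(\frac{2+q}{1-pq},\ N+\frac{p(2+q)}{1-pq},\ N-2+\frac{2+q}{1-pq}\Big)$$ of $\zeta_t=g(\zeta)$ is asymptotically stable (indeed all eigenvalues of the Jacobian $Dg(\zeta_2)$ have negative real part). *)

theory Defs
  imports "HOL-Analysis.Analysis"
begin

definition gfield :: "real \<Rightarrow> real \<Rightarrow> real \<Rightarrow> real^3 \<Rightarrow> real^3" where
  "gfield N p q \<zeta> =
     (let Y = \<zeta>$1; Z = \<zeta>$2; W = \<zeta>$3 in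
      vector [Y * (W - (N - 2) - Y),
              Z * (N + p * Y - Z),
              W * (q * Z - q * N + q + N - W)])"

definition real_matrix_eigenvalue :: "real^'n^'n \<Rightarrow> complex \<Rightarrow> bool" where
  "real_matrix_eigenvalue A \<mu> \<longleftrightarrow>
     (\<exists>v::complex^'n. v \<noteq> 0 \<and>
        (\<chi> i. \<Sum>j\<in>UNIV. complex_of_real (A$i$j) * v$j) = \<mu> *s v)"

definition ode_solution :: "('a::real_normed_vector \<Rightarrow> 'a) \<Rightarrow> (real \<Rightarrow> 'a) \<Rightarrow> bool" where
  "ode_solution f x \<longleftrightarrow>
     (\<forall>t\<ge>0. (x has_vector_derivative f (x t)) (at t within {0..}))"

definition asymptotically_stable :: "('a::real_normed_vector \<Rightarrow> 'a) \<Rightarrow> 'a \<Rightarrow> bool" where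
  "asymptotically_stable f x0 \<longleftrightarrow>
     f x0 = 0 \<and>
     (\<forall>\<epsilon>>0. \<exists>\<delta>>0. \<forall>x. ode_solution f x \<and> dist (x 0) x0 < \<delta> \<longrightarrow>
         (\<forall>t\<ge>0. dist (x t) x0 < \<epsilon>)) \<and>
     (\<exists>\<delta>>0. \<forall>x. ode_solution f x \<and> dist (x 0) x0 < \<delta> \<longrightarrow>
         (x \<longlongrightarrow> x0) at_top)"

end

theory Submission
  imports Defs
begin

text \<open>Writing a, b, w for the coordinates of zeta2 (so that a (1 - p q) = 2 + q), the deviation
  u = zeta - zeta2 obeys u1' = (a + u1)(u3 - u1), u2' = (b + u2)(p u1 - u2),
  u3' = (w + u3)(q u2 - u3). If Re mu \<ge> 0 then |mu + c| \<ge> c for c > 0, so an eigenvector of the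
  cyclic Jacobian would satisfy |v1| \<le> |v3| \<le> q |v2| \<le> p q |v1|, which forces v = 0 since p q < 1.
  For asymptotic stability take V = u1^2/a + s^2 u2^2/(p^2 b) + u3^2/(s^2 w) with s^3 = p q:
  near zeta2 its derivative along solutions is at most -(1 - s) min(a, b, w) V, so V decays
  exponentially and bounds |u|^2 from above and below.\<close>

lemma ode_solution_continuous_on:
  assumes "ode_solution f x"
  shows "continuous_on {0..} x"
  using assms unfolding ode_solution_def
  by (auto simp: continuous_on_eq_continuous_within intro: has_vector_derivative_continuous)

lemma DERIV_nonpos_imp_le_initial:
  fixes h h' :: "real \<Rightarrow> real"
  assumes deriv: "\<And>t. t \<ge> 0 \<Longrightarrow> (h has_real_derivative h' t) (at t within {0..})"
    and nonpos: "\<And>t. 0 < t \<Longrightarrow> t < T \<Longrightarrow> h' t \<le> 0" and "T \<ge> 0"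
  shows "h T \<le> h 0"
proof (rule DERIV_nonpos_imp_decreasing_open[OF \<open>T \<ge> 0\<close>])
  fix t :: real assume t: "0 < t" "t < T"
  have "at t within {0<..} = at t"
    using t by (intro at_within_open) auto
  moreover have "(h has_real_derivative h' t) (at t within {0<..})"
    by (rule DERIV_subset[OF deriv]) (use t in auto)
  ultimately show "\<exists>y. (h has_real_derivative y) (at t) \<and> y \<le> 0"
    using nonpos t by auto
next
  have "continuous_on {0..} h"
    using deriv by (auto simp: continuous_on_eq_continuous_within intro: DERIV_continuous)
  then show "continuous_on {0..T} h"
    by (rule continuous_on_subset) auto
qed

locale quadratic_lyapunov =
  fixes f :: "'a::real_normed_vector \<Rightarrow> 'a" and x0 :: 'a
    and V DV :: "'a \<Rightarrow> real" and m M r c :: real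
  assumes equilibrium: "f x0 = 0"
    and V_has_derivative: "\<And>x t. ode_solution f x \<Longrightarrow> t \<ge> 0 \<Longrightarrow>
          ((\<lambda>t. V (x t)) has_real_derivative DV (x t)) (at t within {0..})"
    and V_lower: "\<And>y. m * (norm (y - x0))\<^sup>2 \<le> V y"
    and V_upper: "\<And>y. V y \<le> M * (norm (y - x0))\<^sup>2"
    and m_pos: "0 < m" and m_le_M: "m \<le> M"
    and r_pos: "0 < r" and c_pos: "0 < c"
    and DV_le: "\<And>y. norm (y - x0) \<le> r \<Longrightarrow> DV y \<le> - c * V y"
begin

lemma V_nonneg: "0 \<le> V y"
  using V_lower[of y] m_pos by (smt (verit) zero_le_power2 mult_nonneg_nonneg)

lemma M_pos: "0 < M"
  using m_pos m_le_M by simp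

lemma V_less_of_norm_less:
  assumes "norm (y - x0) < r * m / M"
  shows "V y < m * r\<^sup>2"
proof -
  have "V y \<le> M * (norm (y - x0))\<^sup>2"
    by (rule V_upper)
  also have "\<dots> < M * (r * m / M)\<^sup>2"
    using assms M_pos by (intro mult_strict_left_mono power_strict_mono) auto
  also have "\<dots> = (m / M) * (m * r\<^sup>2)"
    using M_pos by (simp add: power2_eq_square field_simps)
  also have "\<dots> \<le> m * r\<^sup>2"
    using m_le_M m_pos M_pos by (intro mult_left_le_one_le) auto
  finally show ?thesis .
qed

text \<open>The sublevel set V < m r^2 lies in the ball of radius r, and V cannot increase
  inside that ball; a solution therefore never reaches its boundary.\<close>
lemma solution_stays_in_ball:
  assumes sol: "ode_solution f x" and start: "norm (x 0 - x0) < r * m / M"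
    and "t \<ge> 0"
  shows "norm (x t - x0) < r"
proof (rule ccontr)
  assume exits: "\<not> ?thesis"
  define E where "E = {t \<in> {0..}. r \<le> norm (x t - x0)}"
  have "E \<noteq> {}" using exits \<open>t \<ge> 0\<close> unfolding E_def by auto
  moreover have "bdd_below E" unfolding E_def by (rule bdd_belowI[of _ 0]) auto
  moreover have "closed E" unfolding E_def
    by (intro continuous_on_closed_Collect_le continuous_intros
        ode_solution_continuous_on[OF sol] closed_atLeast)
  ultimately have "Inf E \<in> E" by (rule closed_contains_Inf)
  define T where "T = Inf E"
  have T: "T \<ge> 0" "r \<le> norm (x T - x0)"
    using \<open>Inf E \<in> E\<close> unfolding T_def E_def by auto
  have before: "norm (x t - x0) < r" if "0 \<le> t" "t < T" for t
  proof (rule ccontr)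
    assume "\<not> norm (x t - x0) < r"
    then have "t \<in> E" using that unfolding E_def by auto
    then have "T \<le> t" unfolding T_def using \<open>bdd_below E\<close> by (rule cInf_lower)
    with that show False by simp
  qed
  have "V (x T) \<le> V (x 0)"
  proof (rule DERIV_nonpos_imp_le_initial[OF V_has_derivative[OF sol] _ T(1)])
    fix t assume "0 < t" "t < T"
    then have "DV (x t) \<le> - c * V (x t)" by (intro DV_le less_imp_le before) auto
    also have "\<dots> \<le> 0" using c_pos V_nonneg[of "x t"] by simp
    finally show "DV (x t) \<le> 0" .
  qed
  also have "V (x 0) < m * r\<^sup>2"
    using start by (rule V_less_of_norm_less)
  also have "m * r\<^sup>2 \<le> V (x T)"
    using T(2) r_pos m_pos V_lower[of "x T"]
    by (smt (verit) mult_left_mono power_mono)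
  finally show False by simp
qed

lemma V_exponential_decay:
  assumes sol: "ode_solution f x" and start: "norm (x 0 - x0) < r * m / M" and "t \<ge> 0"
  shows "V (x t) * exp (c * t) \<le> V (x 0)"
proof -
  have "V (x t) * exp (c * t) \<le> V (x 0) * exp (c * 0)"
  proof (rule DERIV_nonpos_imp_le_initial[where h = "\<lambda>t. V (x t) * exp (c * t)"])
    show "((\<lambda>t. V (x t) * exp (c * t)) has_real_derivative
            (DV (x t) + c * V (x t)) * exp (c * t)) (at t within {0..})" if "t \<ge> 0" for t
      by (rule derivative_eq_intros V_has_derivative[OF sol that] refl | simp)+
         (simp add: algebra_simps)
    show "(DV (x t) + c * V (x t)) * exp (c * t) \<le> 0" if "0 < t" for t
      using DV_le[OF less_imp_le[OF solution_stays_in_ball[OF sol start, of t]]] that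
      by (simp add: mult_nonpos_nonneg)
  qed fact
  then show ?thesis by simp
qed

lemma solution_exponential_bound:
  assumes sol: "ode_solution f x" and start: "norm (x 0 - x0) < r * m / M" and "t \<ge> 0"
  shows "(norm (x t - x0))\<^sup>2 \<le> M / m * (norm (x 0 - x0))\<^sup>2 * exp (- c * t)"
proof -
  have "m * (norm (x t - x0))\<^sup>2 * exp (c * t) \<le> V (x t) * exp (c * t)"
    using V_lower[of "x t"] by (intro mult_right_mono) auto
  also have "\<dots> \<le> M * (norm (x 0 - x0))\<^sup>2"
    using V_exponential_decay[OF assms] V_upper[of "x 0"] by linarith
  finally show ?thesis
    using m_pos by (simp add: exp_minus field_simps)
qed

lemma lyapunov_stable:
  assumes "e > 0"
  shows "\<exists>d>0. \<forall>x. ode_solution f x \<and> dist (x 0) x0 < d \<longrightarrow> (\<forall>t\<ge>0. dist (x t) x0 < e)"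
proof -
  define d where "d = min (r * m / M) (e * m / M)"
  have "d > 0" using \<open>e > 0\<close> r_pos m_pos M_pos by (simp add: d_def)
  have "M / m * d\<^sup>2 \<le> M / m * (e * m / M)\<^sup>2"
    using \<open>d > 0\<close> m_pos M_pos by (intro mult_left_mono power_mono) (auto simp: d_def)
  also have "\<dots> = m / M * e\<^sup>2"
    using m_pos M_pos by (simp add: power2_eq_square field_simps)
  also have "\<dots> \<le> e\<^sup>2"
    using m_pos m_le_M by (intro mult_left_le_one_le) auto
  finally have d_small: "M / m * d\<^sup>2 \<le> e\<^sup>2" .
  show ?thesis
  proof (intro exI[of _ d] conjI allI impI \<open>d > 0\<close>)
    fix x t assume x: "ode_solution f x \<and> dist (x 0) x0 < d" and "0 \<le> (t::real)"
    then have start: "norm (x 0 - x0) < d" by (simp add: dist_norm)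
    have "(norm (x t - x0))\<^sup>2 \<le> M / m * (norm (x 0 - x0))\<^sup>2 * exp (- c * t)"
      using x start \<open>t \<ge> 0\<close> by (intro solution_exponential_bound) (auto simp: d_def)
    also have "\<dots> \<le> M / m * (norm (x 0 - x0))\<^sup>2"
      using c_pos \<open>t \<ge> 0\<close> m_pos M_pos by (intro mult_left_le) auto
    also have "\<dots> < M / m * d\<^sup>2"
      using start m_pos M_pos by (intro mult_strict_left_mono power_strict_mono) auto
    finally have "(norm (x t - x0))\<^sup>2 < e\<^sup>2" using d_small by linarith
    then show "dist (x t) x0 < e"
      using \<open>e > 0\<close> by (simp add: dist_norm power_less_imp_less_base)
  qed
qed

lemma solution_tendsto_equilibrium:
  assumes sol: "ode_solution f x" and start: "norm (x 0 - x0) < r * m / M"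
  shows "(x \<longlongrightarrow> x0) at_top"
proof -
  define K where "K = M / m * (norm (x 0 - x0))\<^sup>2"
  have "filterlim (\<lambda>t::real. - c * t) at_bot at_top"
    using c_pos by (intro filterlim_tendsto_neg_mult_at_bot[OF tendsto_const]) (auto simp: filterlim_ident)
  then have "((\<lambda>t. exp (- c * t)) \<longlongrightarrow> 0) at_top"
    using filterlim_compose[OF exp_at_bot] filterlim_at_right_to_0 tendsto_mono at_within_le_nhds
    by blast
  then have lim: "((\<lambda>t. K * exp (- c * t)) \<longlongrightarrow> 0) at_top"
    by (rule tendsto_mult_right_zero)
  have bound: "\<forall>\<^sub>F t in at_top. (norm (x t - x0))\<^sup>2 \<le> K * exp (- c * t)"
    unfolding K_def using sol start
    by (intro eventually_at_top_linorderI[of 0] solution_exponential_bound)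
  have "((\<lambda>t. (norm (x t - x0))\<^sup>2) \<longlongrightarrow> 0) at_top"
    by (rule tendsto_sandwich[OF _ bound tendsto_const lim]) auto
  then have "((\<lambda>t. sqrt ((norm (x t - x0))\<^sup>2)) \<longlongrightarrow> sqrt 0) at_top"
    by (rule tendsto_real_sqrt)
  then have "((\<lambda>t. norm (x t - x0)) \<longlongrightarrow> 0) at_top"
    by simp
  then show ?thesis
    by (simp add: tendsto_norm_zero_iff LIM_zero_iff)
qed

theorem asymptotically_stable: "asymptotically_stable f x0"
  unfolding asymptotically_stable_def
proof (intro conjI allI impI equilibrium lyapunov_stable)
  have "r * m / M > 0" using r_pos m_pos M_pos by simp
  then show "\<exists>d>0. \<forall>x. ode_solution f x \<and> dist (x 0) x0 < d \<longrightarrow> (x \<longlongrightarrow> x0) at_top"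
    using solution_tendsto_equilibrium by (auto simp: dist_norm)
qed

end

lemma norm_le_of_shifted_eigen_eq:
  fixes \<mu> x y :: complex
  assumes "0 \<le> Re \<mu>" "c > 0" "k \<ge> 0" "(\<mu> + of_real c) * x = of_real (c * k) * y"
  shows "cmod x \<le> k * cmod y"
proof -
  have "c \<le> cmod (\<mu> + of_real c)"
    using assms(1) complex_Re_le_cmod[of "\<mu> + of_real c"] by simp
  then have "c * cmod x \<le> cmod ((\<mu> + of_real c) * x)"
    by (simp add: norm_mult mult_right_mono)
  also have "\<dots> = c * (k * cmod y)"
    using assms by (simp add: assms(4) norm_mult)
  finally show ?thesis using \<open>c > 0\<close> by simp
qed

lemma cyclic_matrix_eigenvalue_Re_neg:
  fixes a b w p q :: real
  assumes "a > 0" "b > 0" "w > 0" "p \<ge> 0" "q \<ge> 0" "p * q < 1"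
    and "real_matrix_eigenvalue
           (vector [vector [-a, 0, a], vector [p * b, -b, 0], vector [0, q * w, -w]] :: real^3^3) \<mu>"
  shows "Re \<mu> < 0"
proof (rule ccontr)
  assume "\<not> Re \<mu> < 0"
  then have Re: "0 \<le> Re \<mu>" by simp
  obtain v :: "complex^3" where "v \<noteq> 0" and ev: "(\<chi> i. \<Sum>j\<in>UNIV. complex_of_real
      ((vector [vector [-a, 0, a], vector [p * b, -b, 0], vector [0, q * w, -w]] :: real^3^3)$i$j)
        * v$j) = \<mu> *s v"
    using assms(7) unfolding real_matrix_eigenvalue_def by blast
  have "(\<mu> + of_real a) * v$1 = of_real (a * 1) * v$3"
    using arg_cong[OF ev, of "\<lambda>x. x$1"] by (simp add: sum_3 algebra_simps)
  then have n1: "cmod (v$1) \<le> 1 * cmod (v$3)"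
    using Re \<open>a > 0\<close> by (rule norm_le_of_shifted_eigen_eq[rotated 3]) simp_all
  have "(\<mu> + of_real b) * v$2 = of_real (b * p) * v$1"
    using arg_cong[OF ev, of "\<lambda>x. x$2"] by (simp add: sum_3 algebra_simps)
  then have n2: "cmod (v$2) \<le> p * cmod (v$1)"
    using Re \<open>b > 0\<close> \<open>p \<ge> 0\<close> by (rule norm_le_of_shifted_eigen_eq[rotated 3])
  have "(\<mu> + of_real w) * v$3 = of_real (w * q) * v$2"
    using arg_cong[OF ev, of "\<lambda>x. x$3"] by (simp add: sum_3 algebra_simps)
  then have n3: "cmod (v$3) \<le> q * cmod (v$2)"
    using Re \<open>w > 0\<close> \<open>q \<ge> 0\<close> by (rule norm_le_of_shifted_eigen_eq[rotated 3])
  have "(1 - p * q) * cmod (v$1) \<le> 0"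
    using n1 n3 mult_left_mono[OF n2 \<open>q \<ge> 0\<close>] by (simp add: algebra_simps)
  then have "v$1 = 0"
    using \<open>p * q < 1\<close> by (simp add: mult_le_0_iff)
  then have "v$2 = 0" "v$3 = 0" using n2 n3 by auto
  with \<open>v$1 = 0\<close> \<open>v \<noteq> 0\<close> show False by (simp add: vec_eq_iff forall_3)
qed

text \<open>After the substitution z = (u1, s u2 / p, u3 / s) with s^3 = p q the form becomes
  -|z|^2 + s (z1 z2 + z1 z3 + z2 z3).\<close>
lemma cyclic_quadratic_form_le:
  fixes p q s u1 u2 u3 :: real
  assumes "p > 0" "s > 0" "s ^ 3 = p * q"
  shows "u1 * (u3 - u1) + s\<^sup>2 / p\<^sup>2 * u2 * (p * u1 - u2) + 1 / s\<^sup>2 * u3 * (q * u2 - u3)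
         \<le> - (1 - s) * (u1\<^sup>2 + s\<^sup>2 / p\<^sup>2 * u2\<^sup>2 + u3\<^sup>2 / s\<^sup>2)"
proof -
  define z1 z2 z3 where "z1 = u1" "z2 = s * u2 / p" "z3 = u3 / s"
  have q: "q = s ^ 3 / p" using assms by (simp add: field_simps)
  have "u1 * (u3 - u1) + s\<^sup>2 / p\<^sup>2 * u2 * (p * u1 - u2) + 1 / s\<^sup>2 * u3 * (q * u2 - u3)
        = - (z1\<^sup>2 + z2\<^sup>2 + z3\<^sup>2) + s * (z1 * z2 + z1 * z3 + z2 * z3)"
    unfolding z1_z2_z3_def q using \<open>p > 0\<close> \<open>s > 0\<close>
    by (simp add: field_simps power2_eq_square power3_eq_cube)
  also have "\<dots> \<le> - (z1\<^sup>2 + z2\<^sup>2 + z3\<^sup>2) + s * (z1\<^sup>2 + z2\<^sup>2 + z3\<^sup>2)"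
  proof -
    have "0 \<le> (z1 - z2)\<^sup>2 + (z1 - z3)\<^sup>2 + (z2 - z3)\<^sup>2" by simp
    then have "z1 * z2 + z1 * z3 + z2 * z3 \<le> z1\<^sup>2 + z2\<^sup>2 + z3\<^sup>2"
      by (simp add: power2_eq_square algebra_simps)
    then show ?thesis using \<open>s > 0\<close> by (simp add: mult_left_mono)
  qed
  also have "\<dots> = - (1 - s) * (z1\<^sup>2 + z2\<^sup>2 + z3\<^sup>2)"
    by (simp add: algebra_simps)
  also have "z1\<^sup>2 + z2\<^sup>2 + z3\<^sup>2 = u1\<^sup>2 + s\<^sup>2 / p\<^sup>2 * u2\<^sup>2 + u3\<^sup>2 / s\<^sup>2"
    unfolding z1_z2_z3_def using \<open>p > 0\<close> \<open>s > 0\<close> by (simp add: field_simps power2_eq_square)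
  finally show ?thesis .
qed

locale cyclic_lotka_volterra =
  fixes g :: "real^3 \<Rightarrow> real^3" and a b w p q :: real
  assumes pos: "a > 0" "b > 0" "w > 0" "p > 0" "q > 0"
    and pq_lt_1: "p * q < 1"
    and g1: "\<And>y. g y $ 1 = y$1 * ((y$3 - w) - (y$1 - a))"
    and g2: "\<And>y. g y $ 2 = y$2 * (p * (y$1 - a) - (y$2 - b))"
    and g3: "\<And>y. g y $ 3 = y$3 * (q * (y$2 - b) - (y$3 - w))"
begin

definition zeta :: "real^3" where "zeta = vector [a, b, w]"

definition jacobian :: "real^3^3" where
  "jacobian = vector [vector [-a, 0, a], vector [p * b, -b, 0], vector [0, q * w, -w]]"

definition s :: real where "s = root 3 (p * q)"

text \<open>These weights turn the linear part of DV into the form of cyclic_quadratic_form_le.\<close>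
definition k1 :: real where "k1 = 1 / a"
definition k2 :: real where "k2 = s\<^sup>2 / (p\<^sup>2 * b)"
definition k3 :: real where "k3 = 1 / (s\<^sup>2 * w)"

definition V :: "real^3 \<Rightarrow> real" where
  "V y = k1 * (y$1 - a)\<^sup>2 + k2 * (y$2 - b)\<^sup>2 + k3 * (y$3 - w)\<^sup>2"

definition DV :: "real^3 \<Rightarrow> real" where
  "DV y = 2 * (k1 * (y$1 - a) * g y $ 1 + k2 * (y$2 - b) * g y $ 2 + k3 * (y$3 - w) * g y $ 3)"

definition decay_rate :: real where "decay_rate = (1 - s) * min a (min b w)"

definition radius :: real where "radius = decay_rate / (2 * (p + q + 2))"

lemma s_pos: "s > 0" and s_lt_1: "s < 1" and s_cube: "s ^ 3 = p * q"
  using pos pq_lt_1 by (simp_all add: s_def real_root_pow_pos2)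

lemma k_pos: "k1 > 0" "k2 > 0" "k3 > 0"
  using pos s_pos by (simp_all add: k1_def k2_def k3_def)

lemma decay_rate_pos: "decay_rate > 0"
  using pos s_lt_1 by (simp add: decay_rate_def)

lemma radius_pos: "radius > 0"
  using pos decay_rate_pos by (simp add: radius_def)

lemma g_zeta_eq_zero: "g zeta = 0"
  by (simp add: vec_eq_iff forall_3 g1 g2 g3 zeta_def)

lemma norm_sq_eq: "(norm (y - zeta))\<^sup>2 = (y$1 - a)\<^sup>2 + (y$2 - b)\<^sup>2 + (y$3 - w)\<^sup>2"
  by (simp add: norm_vec_def L2_set_def sum_3 zeta_def)

lemma V_lower: "min k1 (min k2 k3) * (norm (y - zeta))\<^sup>2 \<le> V y"
  unfolding norm_sq_eq V_def distrib_left
  by (intro add_mono mult_right_mono) auto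

lemma V_upper: "V y \<le> max k1 (max k2 k3) * (norm (y - zeta))\<^sup>2"
  unfolding norm_sq_eq V_def distrib_left
  by (intro add_mono mult_right_mono) auto

lemma V_has_derivative:
  assumes "ode_solution g x" "t \<ge> 0"
  shows "((\<lambda>t. V (x t)) has_real_derivative DV (x t)) (at t within {0..})"
proof -
  have component: "((\<lambda>t. x t $ i) has_real_derivative g (x t) $ i) (at t within {0..})" for i
    unfolding has_real_derivative_iff_has_vector_derivative
    using assms unfolding ode_solution_def
    by (intro bounded_linear.has_vector_derivative[OF bounded_linear_vec_nth]) auto
  show ?thesis unfolding V_def
    by (rule derivative_eq_intros component refl | simp)+ (simp add: DV_def algebra_simps)
qed

text \<open>DV splits into the quadratic form of cyclic_quadratic_form_le and a cubic remainder;
  the radius is chosen so that the remainder costs at most half of the decay.\<close>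
lemma DV_le:
  assumes "norm (y - zeta) \<le> radius"
  shows "DV y \<le> - decay_rate * V y"
proof -
  define u1 u2 u3 where "u1 = y$1 - a" "u2 = y$2 - b" "u3 = y$3 - w"
  define L where "L = p + q + 2"
  define C where "C = u1\<^sup>2 + s\<^sup>2 / p\<^sup>2 * u2\<^sup>2 + u3\<^sup>2 / s\<^sup>2"
  have "\<bar>(y - zeta) $ i\<bar> \<le> radius" for i
    using assms component_le_norm_cart[of "y - zeta" i] by linarith
  then have u: "\<bar>u1\<bar> \<le> radius" "\<bar>u2\<bar> \<le> radius" "\<bar>u3\<bar> \<le> radius"
    unfolding u1_u2_u3_def zeta_def by (metis vector_3 vector_minus_component)+
  have V: "V y = k1 * u1\<^sup>2 + k2 * u2\<^sup>2 + k3 * u3\<^sup>2"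
    by (simp add: V_def u1_u2_u3_def)
  have "DV y = 2 * (u1 * (u3 - u1) + s\<^sup>2 / p\<^sup>2 * u2 * (p * u1 - u2) + 1 / s\<^sup>2 * u3 * (q * u2 - u3))
             + 2 * (k1 * u1\<^sup>2 * (u3 - u1) + k2 * u2\<^sup>2 * (p * u1 - u2) + k3 * u3\<^sup>2 * (q * u2 - u3))"
    using pos s_pos unfolding DV_def g1 g2 g3 k1_def k2_def k3_def u1_u2_u3_def
    by (simp add: field_simps power2_eq_square)
  also have "\<dots> \<le> 2 * (- (1 - s) * C) + 2 * (L * radius * V y)"
  proof -
    have "p * u1 \<le> p * radius" "q * u2 \<le> q * radius"
      using u pos by (auto intro!: mult_left_mono simp: abs_le_iff)
    moreover have "0 < p * radius" "0 < q * radius"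
      using pos radius_pos by auto
    ultimately have "u3 - u1 \<le> L * radius" "p * u1 - u2 \<le> L * radius" "q * u2 - u3 \<le> L * radius"
      using u unfolding L_def distrib_right by linarith+
    then have "k1 * u1\<^sup>2 * (u3 - u1) + k2 * u2\<^sup>2 * (p * u1 - u2) + k3 * u3\<^sup>2 * (q * u2 - u3)
               \<le> k1 * u1\<^sup>2 * (L * radius) + k2 * u2\<^sup>2 * (L * radius) + k3 * u3\<^sup>2 * (L * radius)"
      using k_pos by (intro add_mono mult_left_mono) auto
    also have "\<dots> = L * radius * V y"
      unfolding V by (simp add: algebra_simps)
    finally have "k1 * u1\<^sup>2 * (u3 - u1) + k2 * u2\<^sup>2 * (p * u1 - u2) + k3 * u3\<^sup>2 * (q * u2 - u3)
               \<le> L * radius * V y" .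
    with cyclic_quadratic_form_le[OF pos(4) s_pos s_cube, of u1 u3 u2] show ?thesis
      unfolding C_def by simp
  qed
  also have "\<dots> \<le> - decay_rate * V y"
  proof -
    have "min a (min b w) * V y
          \<le> a * (k1 * u1\<^sup>2) + b * (k2 * u2\<^sup>2) + w * (k3 * u3\<^sup>2)"
      unfolding V distrib_left using k_pos by (intro add_mono mult_right_mono) auto
    also have "\<dots> = C"
      unfolding C_def k1_def k2_def k3_def using pos s_pos by (simp add: field_simps)
    finally have "decay_rate * V y \<le> (1 - s) * C"
      unfolding decay_rate_def using s_lt_1 by (simp add: mult_left_mono mult.assoc)
    moreover have "2 * (L * radius * V y) = decay_rate * V y"
      unfolding L_def radius_def using pos by (simp add: field_simps)
    ultimately show ?thesis
      by linarith
  qed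
  finally show ?thesis .
qed

sublocale quadratic_lyapunov g zeta V DV "min k1 (min k2 k3)" "max k1 (max k2 k3)"
  radius decay_rate
  using g_zeta_eq_zero V_has_derivative V_lower V_upper k_pos radius_pos decay_rate_pos DV_le
  by unfold_locales auto

lemma has_derivative_jacobian: "(g has_derivative (\<lambda>h. jacobian *v h)) (at zeta)"
proof -
  have nth: "((\<lambda>y::real^3. y $ i) has_derivative (\<lambda>h. h $ i)) (at zeta)" for i
    by (rule bounded_linear_imp_has_derivative) (rule bounded_linear_vec_nth)
  have "((\<lambda>y. g y $ i) has_derivative (\<lambda>h. (jacobian *v h) $ i)) (at zeta)" for i
  proof -
    consider "i = 1" | "i = 2" | "i = 3" using exhaust_3 by blast
    then show ?thesis
      by cases
        (simp only: g1 g2 g3,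
         (rule derivative_eq_intros nth refl | simp)+,
         simp add: jacobian_def zeta_def matrix_vector_mult_def sum_3 algebra_simps)+
  qed
  then show ?thesis
    by (subst has_derivative_componentwise_within)
       (auto simp: Basis_vec_def cart_eq_inner_axis[symmetric])
qed

lemma jacobian_eigenvalue_Re_neg: "real_matrix_eigenvalue jacobian \<mu> \<Longrightarrow> Re \<mu> < 0"
  unfolding jacobian_def using pos pq_lt_1 by (intro cyclic_matrix_eigenvalue_Re_neg) auto

end

lemma gfield_cyclic_lotka_volterra:
  fixes N p q a :: real
  assumes "N \<ge> 2" "p > 0" "q > 0" "p * q < 1" and a_eq: "a * (1 - p * q) = 2 + q"
  shows "cyclic_lotka_volterra (gfield N p q) a (N + p * a) (N - 2 + a) p q"
proof
  show "a > 0"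
    using assms by (smt (verit) zero_less_mult_iff)
  moreover from this have "p * a > 0"
    using assms by simp
  ultimately show "N + p * a > 0" "N - 2 + a > 0"
    using assms by linarith+
  show "gfield N p q y $ 1 = y$1 * ((y$3 - (N - 2 + a)) - (y$1 - a))"
    and "gfield N p q y $ 2 = y$2 * (p * (y$1 - a) - (y$2 - (N + p * a)))" for y
    by (simp_all add: gfield_def Let_def algebra_simps)
  have "q * y$2 - q * N + q + N - y$3 = q * (y$2 - (N + p * a)) - (y$3 - (N - 2 + a))" for y :: "real^3"
    using a_eq by (simp add: algebra_simps)
  then show "gfield N p q y $ 3 = y$3 * (q * (y$2 - (N + p * a)) - (y$3 - (N - 2 + a)))" for y
    by (simp add: gfield_def Let_def)
qed (use assms in auto)

theorem lemma7p2:
  fixes N :: nat and p q :: real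
  assumes "N \<ge> 2" and "0 < p" and "p < 1" and "1 \<le> q" and "p * q < 1"
  defines "\<zeta>2 \<equiv> vector [(2 + q) / (1 - p * q),
                          real N + p * (2 + q) / (1 - p * q),
                          real N - 2 + (2 + q) / (1 - p * q)] :: real^3"
  shows "gfield (real N) p q \<zeta>2 = 0 \<and>
         asymptotically_stable (gfield (real N) p q) \<zeta>2 \<and>
         (\<exists>A::real^3^3. (gfield (real N) p q has_derivative (\<lambda>h. A *v h)) (at \<zeta>2) \<and>
              (\<forall>\<mu>. real_matrix_eigenvalue A \<mu> \<longrightarrow> Re \<mu> < 0))"
proof -
  define a where "a = (2 + q) / (1 - p * q)"
  interpret cyclic_lotka_volterra "gfield (real N) p q" a "real N + p * a" "real N - 2 + a" p q
    using assms by (intro gfield_cyclic_lotka_volterra) (auto simp: a_def)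
  have "\<zeta>2 = zeta"
    unfolding zeta_def by (simp add: \<zeta>2_def a_def)
  then show ?thesis
    using g_zeta_eq_zero asymptotically_stable has_derivative_jacobian jacobian_eigenvalue_Re_neg by blast
qed

end
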